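(* Consider the client selection problem and the COCS policy described in the context, and suppose the Hölder condition holds with constants $L>0$, $\alpha>0$. Let $z=\frac{2\alpha}{3\alpha+2}\in(0,1)$, $\gamma=\frac{z}{2\alpha}$, $\theta=-\frac z2$, $A=\frac{2NMB}{c^{\min}}+\frac{2NMB}{c^{\min}}L2^{\alpha/2}$, and run COCS with $K(t)=t^{z}\log(t)$ and $h_T=\lceil T^{\gamma}\rceil$. Then $$\mathbb{E}[R(T)]\le \frac{4N^2MB}{c^{\min}}\Big(\log(T)T^{\frac{2\alpha+2}{3\alpha+2}}+T^{\frac{2}{3\alpha+2}}\Big)+\frac{NMB}{c^{\min}}\Big(\sum_{k=1}^{B/c^{\min}}\binom{N}{k}\Big)\frac{\pi^2}{3}+\Big(3L2^{\alpha/2}+\frac{2+2L2^{\alpha/2}}{(2\alpha+2)/(3\alpha+2)}\Big)\frac{NMB}{c^{\min}}T^{\frac{2\alpha+2}{3\alpha+2}},$$ where $c^{\min}=\min_{n,t}c_n(y_n^t)$. In particular, $\mathbb{E}[R(T)]=O\big(\frac{4N^2MB}{c^{\min}}T^{\frac{2\alpha+2}{3\alpha+2}}\log(T)\big)$.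
   Context: Setting. There are $N$ clients indexed by $\mathcal N=\{1,\dots,N\}$, $M$ edge servers (ESs) indexed by $\mathcal M=\{1,\dots,M\}$, and rounds $t=1,\dots,T$. In round $t$, ES $m$ can communicate with a set $\mathcal N_m^t\subseteq\mathcal N$ of clients (these sets may overlap). Each client $n$ reveals computation resources $y_n^t$ and charges a cost $c_n(y_n^t)>0$, with $c_n$ nondecreasing; $c^{\min}=\min_{n,t}c_n(y_n^t)$. Each ES has budget $B>0$. A feasible client selection decision in round $t$ is $\bm s^t=(\bm s_1^t,\dots,\bm s_M^t)$ with $\bm s_m^t\subseteq\mathcal N_m^t$, $\sum_{n\in\bm s_m^t}c_n(y_n^t)\le B$ for every $m$, and $\bm s_m^t\cap\bm s_{m'}^t=\emptyset$ for $m\neq m'$. Each client-ES pair $(n,m)$ with $n\in\mathcal N_m^t$ has an observed context $\phi_{n,m}^t\in\Phi=[0,1]^2$. If client $n$ is selected by ES $m$ in round $t$, its participation indicator $X_{n,m}^t\in\{0,1\}$ is Bernoulli with mean $p_{n,m}(\phi_{n,m}^t)$, where $p_{n,m}:\Phi\to[0,1]$ is unknown. The utility is $\mu(\bm s^t;\bm X^t)=\frac1M\sum_{m\in\mathcal M}\sum_{n\in\bm s_m^t}X_{n,m}^t$ (and $\mu(\bm s;\bm p^t)$ is the same with $p_{n,m}(\phi^t_{n,m})$ in place of $X^t_{n,m}$). The oracle decision $\bm s^{\mathrm{opt},t}$ maximizes $\mu(\bm s;\bm p^t)$ over feasible decisions. The expected regret of the policy choosing $\bm s^1,\dots,\bm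 s^T$ is $\mathbb E[R(T)]=\sum_{t=1}^T(\mathbb E[\mu(\bm s^{\mathrm{opt},t};\bm X^t)]-\mathbb E[\mu(\bm s^t;\bm X^t)])$. Hölder condition: there exist $L>0,\alpha>0$ with $|p_{n,m}(\phi)-p_{n,m}(\phi')|\le L\|\phi-\phi'\|^{\alpha}$ for all $\phi,\phi'\in\Phi$ and all pairs $(n,m)$ (Euclidean norm). COCS policy (inputs: increasing function $K$, integer $h_T$). Partition $\Phi$ into $h_T^2$ squares of side $1/h_T$. For each pair $(n,m)$ and square $l$ keep a counter $C_{n,m}(l)$ (initially $0$) and an estimate $\hat p_{n,m}(l)$ equal to the sample mean of indicators observed when $n$ was selected by $m$ with context in $l$. In round $t$: observe contexts, let $l^t_{n,m}$ be the square containing $\phi^t_{n,m}$, set $\hat X^t_{n,m}=\hat p_{n,m}(l^t_{n,m})$; a pair is under-explored if $C_{n,m}(l^t_{n,m})\le K(t)$. If an under-explored pair exists (exploration round), select a feasible decision that first maximizes the number of selected under-explored clients and then spends remaining per-ES budget on explored clients maximizing $\mu(\cdot;\hat{\bm X}^t)$. Otherwise (exploitation round), select a feasible $\bm s^t$ maximizing $\mu(\bm s;\hat{\bm X}^t)$. At the end of the round, for each selected pair observe $X^t_{n,m}$ and update $\hat p_{n,m}(l^t_{n,m})$ (running mean) and $C_{n,m}(l^t_{n,m})$ (increment). *)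

theory Defs
  imports "HOL-Probability.Probability"
begin

(* Conventions:
   clients n \<in> {1..N}, edge servers m \<in> {1..M}, rounds t \<in> {1..T}.
   avail m t   = N_m^t  (clients ES m can reach in round t)
   cost n t    = c_n(y_n^t)
   ctx t n m   = \<phi>_{n,m}^t \<in> [0,1]^2  (as real \<times> real, Euclidean norm)
   A decision is a function s :: nat \<Rightarrow> nat set,  s m = s_m^t.
   An outcome \<omega> :: nat \<times> nat \<times> nat \<Rightarrow> bool gives \<omega>(t,n,m) = X_{n,m}^t. *)

definition Phi :: "(real \<times> real) set" where
  "Phi = {0..1} \<times> {0..1}"

definition feasible ::
  "nat \<Rightarrow> real \<Rightarrow> (nat \<Rightarrow> nat \<Rightarrow> nat set) \<Rightarrow> (nat \<Rightarrow> nat \<Rightarrow> real) \<Rightarrow> nat \<Rightarrow> (nat \<Rightarrow> nat set) \<Rightarrow> bool" where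
  "feasible M B avail cost t s \<longleftrightarrow>
     (\<forall>m\<in>{1..M}. s m \<subseteq> avail m t \<and> (\<Sum>n\<in>s m. cost n t) \<le> B) \<and>
     (\<forall>m\<in>{1..M}. \<forall>m'\<in>{1..M}. m \<noteq> m' \<longrightarrow> s m \<inter> s m' = {})"

definition util :: "nat \<Rightarrow> (nat \<Rightarrow> nat set) \<Rightarrow> (nat \<Rightarrow> nat \<Rightarrow> real) \<Rightarrow> real" where
  "util M s w = (1 / real M) * (\<Sum>m\<in>{1..M}. \<Sum>n\<in>s m. w n m)"

definition Xof :: "(nat \<times> nat \<times> nat \<Rightarrow> bool) \<Rightarrow> nat \<Rightarrow> nat \<Rightarrow> nat \<Rightarrow> real" where
  "Xof \<omega> t n m = (if \<omega> (t, n, m) then 1 else 0)"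

text \<open>Partition of [0,1]^2 into h^2 squares of side 1/h (cells indexed by (i,j), 0 \<le> i,j < h;
  the right/top boundary belongs to the last cell).\<close>
definition cell_idx :: "nat \<Rightarrow> real \<Rightarrow> nat" where
  "cell_idx h x = min (h - 1) (nat \<lfloor>x * real h\<rfloor>)"

definition cell :: "nat \<Rightarrow> real \<times> real \<Rightarrow> nat \<times> nat" where
  "cell h \<phi> = (cell_idx h (fst \<phi>), cell_idx h (snd \<phi>))"

definition cnt ::
  "(nat \<Rightarrow> (nat \<times> nat \<times> nat \<Rightarrow> bool) \<Rightarrow> nat \<Rightarrow> nat set) \<Rightarrow> (nat \<Rightarrow> nat \<Rightarrow> nat \<Rightarrow> real \<times> real) \<Rightarrow> nat
    \<Rightarrow> nat \<Rightarrow> nat \<Rightarrow> nat \<Rightarrow> nat \<times> nat \<Rightarrow> (nat \<times> nat \<times> nat \<Rightarrow> bool) \<Rightarrow> nat" where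
  "cnt sel ctx h t n m l \<omega> = card {t'\<in>{1..<t}. n \<in> sel t' \<omega> m \<and> cell h (ctx t' n m) = l}"

definition succ_cnt ::
  "(nat \<Rightarrow> (nat \<times> nat \<times> nat \<Rightarrow> bool) \<Rightarrow> nat \<Rightarrow> nat set) \<Rightarrow> (nat \<Rightarrow> nat \<Rightarrow> nat \<Rightarrow> real \<times> real) \<Rightarrow> nat
    \<Rightarrow> nat \<Rightarrow> nat \<Rightarrow> nat \<Rightarrow> nat \<times> nat \<Rightarrow> (nat \<times> nat \<times> nat \<Rightarrow> bool) \<Rightarrow> nat" where
  "succ_cnt sel ctx h t n m l \<omega> =
     card {t'\<in>{1..<t}. n \<in> sel t' \<omega> m \<and> cell h (ctx t' n m) = l \<and> \<omega> (t', n, m)}"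

text \<open>Sample-mean estimate hat p_{n,m}(l) (equal to 0 when nothing observed yet).\<close>
definition phat where
  "phat sel ctx h t n m l \<omega> = real (succ_cnt sel ctx h t n m l \<omega>) / real (cnt sel ctx h t n m l \<omega>)"

definition xhat where
  "xhat sel ctx h t \<omega> n m = phat sel ctx h t n m (cell h (ctx t n m)) \<omega>"

definition under_explored where
  "under_explored M avail sel ctx K h t \<omega> =
     {(n, m). m \<in> {1..M} \<and> n \<in> avail m t \<and> real (cnt sel ctx h t n m (cell h (ctx t n m)) \<omega>) \<le> K t}"

definition num_ue :: "nat \<Rightarrow> (nat \<times> nat) set \<Rightarrow> (nat \<Rightarrow> nat set) \<Rightarrow> nat" where
  "num_ue M U s = card {(n, m). m \<in> {1..M} \<and> n \<in> s m \<and> (n, m) \<in> U}"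

text \<open>Exploration round: s maximizes the number of selected under-explored pairs, and, among feasible
  decisions with the same under-explored part, maximizes mu(.; hat X) (i.e. the remaining budget is
  spent on explored clients maximizing the estimated utility).  Ties may be broken arbitrarily.\<close>
definition cocs_choice where
  "cocs_choice M B avail cost ctx K h sel t \<omega> s \<longleftrightarrow>
     (let U = under_explored M avail sel ctx K h t \<omega>;
          xh = xhat sel ctx h t \<omega>;
          fe = feasible M B avail cost t
      in if U \<noteq> {} then
           fe s \<and> (\<forall>s'. fe s' \<longrightarrow> num_ue M U s' \<le> num_ue M U s) \<and>
           (\<forall>s'. fe s' \<and> (\<forall>m\<in>{1..M}. {n\<in>s' m. (n, m) \<in> U} = {n\<in>s m. (n, m) \<in> U})
                 \<longrightarrow> util M s' xh \<le> util M s xh)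
         else
           fe s \<and> (\<forall>s'. fe s' \<longrightarrow> util M s' xh \<le> util M s xh))"

text \<open>sel t omega = s^t for outcome realisation omega. A COCS run: decisions in round t depend only on
  outcomes of rounds < t, and each decision follows the COCS rule.\<close>
definition is_COCS where
  "is_COCS T M B avail cost ctx K h sel \<longleftrightarrow>
     (\<forall>t\<in>{1..T}. \<forall>\<omega> \<omega>'. (\<forall>t' n m. t' < t \<longrightarrow> \<omega> (t', n, m) = \<omega>' (t', n, m)) \<longrightarrow> sel t \<omega> = sel t \<omega>') \<and>
     (\<forall>t\<in>{1..T}. \<forall>\<omega>. cocs_choice M B avail cost ctx K h sel t \<omega> (sel t \<omega>))"

definition outcomes ::
  "nat \<Rightarrow> nat \<Rightarrow> nat \<Rightarrow> (nat \<Rightarrow> nat \<Rightarrow> real \<times> real \<Rightarrow> real) \<Rightarrow> (nat \<Rightarrow> nat \<Rightarrow> nat \<Rightarrow> real \<times> real)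
     \<Rightarrow> (nat \<times> nat \<times> nat \<Rightarrow> bool) pmf" where
  "outcomes T N M p ctx =
     Pi_pmf ({1..T} \<times> {1..N} \<times> {1..M}) False (\<lambda>(t, n, m). bernoulli_pmf (p n m (ctx t n m)))"

definition exp_regret where
  "exp_regret T M \<Omega> sopt sel =
     (\<Sum>t\<in>{1..T}. measure_pmf.expectation \<Omega> (\<lambda>\<omega>. util M (sopt t) (Xof \<omega> t))
                 - measure_pmf.expectation \<Omega> (\<lambda>\<omega>. util M (sel t \<omega>) (Xof \<omega> t)))"

end

theory Submission
  imports Defs "HOL-Analysis.Gamma_Function"
begin

(* Every feasible decision selects at most cap = B / cmin clients per edge server, so the
   regret of a single round is at most cap.  A round is charged fully if it explores (selects an
   under-explored pair) or if it is bad (for some explored pair the observed participations in the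
   current cell deviate from the sum of their means by more than t^(-z/2) per observation).
   Every exploration round increments a counter C_{n,m}(l) that is still at most K(T), so there are
   at most N M h^2 (K(T) + 1) of them.  An exponential supermartingale built from Hoeffding's lemma
   for Bernoulli variables and Markov's inequality shows that round t is bad with probability at
   most 2 N M / t^2, which sums to at most N M pi^2 / 3.  In all other rounds every estimate that
   matters is within t^(-z/2) + L (sqrt 2 / h)^alpha of the true participation probability
   (Hoelder continuity on a cell of diameter sqrt 2 / h), so maximizing the estimated utility loses
   at most 2 cap times this error; summing over t gives the T^((2 alpha + 2)/(3 alpha + 2)) terms. *)

lemma bernoulli_mgf_le_hoeffding:
  fixes q lam :: real
  assumes q: "0 \<le> q" "q \<le> 1"
  shows "q * exp (lam * (1 - q)) + (1 - q) * exp (- lam * q) \<le> exp (lam\<^sup>2 / 8)"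
proof (cases "lam \<ge> 0")
  case True
  have pos: "1 + q * (exp lam - 1) > 0"
    using q True by (intro add_pos_nonneg mult_nonneg_nonneg) auto
  have "q * exp (lam * (1 - q)) + (1 - q) * exp (- lam * q) = exp (- lam * q) * (1 + q * (exp lam - 1))"
    by (simp add: algebra_simps flip: exp_add)
  also have "\<dots> = exp (- lam * q + ln (1 + q * (exp lam - 1)))"
    by (simp only: exp_add exp_ln[OF pos])
  also have "\<dots> \<le> exp (lam\<^sup>2 / 8)"
    using Hoeffdings_lemma_aux[of lam q] True q by simp
  finally show ?thesis .
next
  case False
  define k where "k = - lam"
  have k: "k \<ge> 0" using False k_def by simp
  have pos: "1 + (1 - q) * (exp k - 1) > 0"
    using q k by (intro add_pos_nonneg mult_nonneg_nonneg) auto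
  have "q * exp (lam * (1 - q)) + (1 - q) * exp (- lam * q)
        = exp (- k * (1 - q)) * (1 + (1 - q) * (exp k - 1))"
    by (simp add: k_def algebra_simps flip: exp_add)
  also have "\<dots> = exp (- k * (1 - q) + ln (1 + (1 - q) * (exp k - 1)))"
    by (simp only: exp_add exp_ln[OF pos])
  also have "\<dots> \<le> exp (k\<^sup>2 / 8)"
    using Hoeffdings_lemma_aux[of k "1 - q"] k q by simp
  finally show ?thesis by (simp add: k_def)
qed

lemma finite_set_Pi_pmf:
  assumes "finite A" "\<And>a. a \<in> A \<Longrightarrow> finite (set_pmf (P a))"
  shows "finite (set_pmf (Pi_pmf A d P))"
  using set_Pi_pmf_subset'[OF assms(1), of d P] finite_PiE_dflt[of A "set_pmf \<circ> P" d] assms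
  by (auto intro: finite_subset)

lemma expectation_Pi_pmf_resample:
  fixes P :: "'a \<Rightarrow> bool pmf" and F :: "('a \<Rightarrow> bool) \<Rightarrow> real"
  assumes fin: "finite A" and a: "a \<in> A"
  shows "measure_pmf.expectation (Pi_pmf A d P) F =
         measure_pmf.expectation (Pi_pmf A d P)
           (\<lambda>w. pmf (P a) True * F (w(a := True)) + pmf (P a) False * F (w(a := False)))"
proof -
  define A' where "A' = A - {a}"
  define Q where "Q = Pi_pmf A' d P"
  have finQ: "finite (set_pmf Q)"
    unfolding Q_def A'_def using fin by (intro finite_set_Pi_pmf) auto
  have "A = insert a A'" using a by (auto simp: A'_def)
  then have decomp: "Pi_pmf A d P = P a \<bind> (\<lambda>b. map_pmf (\<lambda>f. f(a := b)) Q)"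
    unfolding Q_def by (simp only:) (subst Pi_pmf_insert', auto simp: fin A'_def map_pmf_def)
  have E: "measure_pmf.expectation (Pi_pmf A d P) G =
           pmf (P a) True * measure_pmf.expectation Q (\<lambda>f. G (f(a := True))) +
           pmf (P a) False * measure_pmf.expectation Q (\<lambda>f. G (f(a := False)))" for G :: "_ \<Rightarrow> real"
  proof -
    have "measure_pmf.expectation (Pi_pmf A d P) G =
          (\<Sum>b\<in>UNIV. pmf (P a) b *\<^sub>R measure_pmf.expectation (map_pmf (\<lambda>f. f(a := b)) Q) G)"
      unfolding decomp by (rule pmf_expectation_bind) (auto simp: finQ)
    then show ?thesis by (simp add: UNIV_bool)
  qed
  have "(\<Sum>b\<in>UNIV. pmf (P a) b) = 1"
    by (rule sum_pmf_eq_1) auto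
  then have one: "pmf (P a) True + pmf (P a) False = 1"
    by (simp add: UNIV_bool add.commute)
  define G where "G = (\<lambda>w. pmf (P a) True * F (w(a := True)) + pmf (P a) False * F (w(a := False)))"
  have "measure_pmf.expectation (Pi_pmf A d P) G = measure_pmf.expectation Q G"
    unfolding E using one by (simp add: G_def algebra_simps flip: distrib_right)
  also have "\<dots> = measure_pmf.expectation (Pi_pmf A d P) F"
    unfolding E G_def by (simp add: integrable_measure_pmf_finite[OF finQ])
  finally show ?thesis by (simp add: G_def)
qed

definition determined_before :: "nat \<Rightarrow> ((nat \<times> nat \<times> nat \<Rightarrow> bool) \<Rightarrow> 'b) \<Rightarrow> bool" where
  "determined_before t F \<longleftrightarrow>
     (\<forall>w w'. (\<forall>t' n m. t' < t \<longrightarrow> w (t', n, m) = w' (t', n, m)) \<longrightarrow> F w = F w')"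

lemma determined_before_fun_upd:
  assumes "determined_before t F" "t \<le> fst a"
  shows "F (w(a := b)) = F w"
  using assms unfolding determined_before_def by (metis fun_upd_other fst_conv leD)

lemma sum_inverse_squares_le:
  "(\<Sum>t=1..T. 1 / (real t)\<^sup>2) \<le> pi\<^sup>2 / 6"
proof -
  have "(\<Sum>t=1..T. 1 / (real t)\<^sup>2) = (\<Sum>n<T. 1 / real ((n + 1)\<^sup>2))"
    by (rule sum.reindex_bij_witness[of _ "\<lambda>n. n + 1" "\<lambda>t. t - 1"]) auto
  also have "\<dots> \<le> (\<Sum>n. 1 / real ((n + 1)\<^sup>2))"
    by (rule sum_le_suminf) (use inverse_squares_sums in \<open>auto simp: sums_iff\<close>)
  also have "\<dots> = pi\<^sup>2 / 6" using inverse_squares_sums by (simp add: sums_iff)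
  finally show ?thesis .
qed

lemma exp_neg_2_ln:
  fixes x :: real
  assumes "x > 0"
  shows "exp (- (2 * ln x)) = 1 / x\<^sup>2"
proof -
  have "exp (2 * ln x) = x\<^sup>2"
    using exp_add[of "ln x" "ln x"] assms by (simp add: power2_eq_square)
  then show ?thesis by (simp add: exp_minus inverse_eq_divide)
qed

lemma powr_neg_le_powr_diff:
  fixes a x :: real
  assumes a: "0 \<le> a" "a < 1" and x: "x \<ge> 1"
  shows "(x + 1) powr (-a) \<le> ((x + 1) powr (1 - a) - x powr (1 - a)) / (1 - a)"
proof -
  have der: "\<And>u. x \<le> u \<Longrightarrow> u \<le> x + 1 \<Longrightarrow>
      DERIV (\<lambda>u. u powr (1 - a)) u :> (1 - a) * u powr (1 - a - 1)"
    using x by (auto intro!: derivative_eq_intros)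
  obtain u where u: "x < u" "u < x + 1"
    and eq: "(x + 1) powr (1 - a) - x powr (1 - a) = (x + 1 - x) * ((1 - a) * u powr (1 - a - 1))"
    using MVT2[of x "x + 1", OF _ der] by auto
  have "(x + 1) powr (-a) \<le> u powr (-a)"
    using u x a by (intro powr_mono2') auto
  also have "\<dots> = ((x + 1) powr (1 - a) - x powr (1 - a)) / (1 - a)"
    using eq a by simp
  finally show ?thesis .
qed

lemma sum_powr_neg_le:
  fixes a :: real
  assumes a: "0 \<le> a" "a < 1" and T: "T \<ge> 1"
  shows "(\<Sum>t=1..T. real t powr (-a)) \<le> real T powr (1 - a) / (1 - a)"
  using T
proof (induction T rule: dec_induct)
  case base
  then show ?case using a by (simp add: field_simps)
next
  case (step n)
  have "(\<Sum>t=1..Suc n. real t powr (-a)) = (\<Sum>t=1..n. real t powr (-a)) + (real n + 1) powr (-a)"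
    by (simp add: add.commute)
  also have "\<dots> \<le> real n powr (1 - a) / (1 - a)
                   + ((real n + 1) powr (1 - a) - real n powr (1 - a)) / (1 - a)"
    using step powr_neg_le_powr_diff[of a "real n"] a by (intro add_mono) auto
  also have "\<dots> = real (Suc n) powr (1 - a) / (1 - a)"
    by (simp add: diff_divide_distrib add.commute)
  finally show ?case .
qed

lemma large_deviation_tilt:
  fixes H k0 k d l :: real
  assumes H: "H > 0" and l: "H\<^sup>2 * k0 = l" and k: "k0 \<le> k" and d: "\<bar>d\<bar> > H * k"
  shows "2 * l \<le> (4 * H) * d - (4 * H)\<^sup>2 / 8 * k \<or> 2 * l \<le> (- 4 * H) * d - (- 4 * H)\<^sup>2 / 8 * k"
proof -
  have "l \<le> H\<^sup>2 * k" using mult_left_mono[OF k, of "H\<^sup>2"] l by simp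
  moreover have "4 * H * (H * k) \<le> 4 * H * \<bar>d\<bar>" using H d by simp
  ultimately show ?thesis by (cases "d \<ge> 0") (auto simp: power2_eq_square algebra_simps)
qed

lemma scaled_error_bound_le:
  fixes B c P S e X n m :: real
  assumes B: "0 < B" and c: "0 < c" and P: "0 \<le> P" and S: "0 \<le> S" and e: "0 < e" "e \<le> 1"
    and n: "1 \<le> n" and m: "1 \<le> m" and X: "X \<le> P / e + S * P"
  shows "2 * (B / c) * X \<le> (3 * S + (2 + 2 * S) / e) * n * m * B / c * P"
proof -
  define D where "D = B / c"
  have D: "0 \<le> D" using B c by (simp add: D_def)
  have "2 * D * X \<le> 2 * D * (P / e + S * P)" using X D by (intro mult_left_mono) auto
  also have "\<dots> = D * P * (2 / e + 2 * S)" by (simp add: algebra_simps)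
  also have "\<dots> \<le> D * P * (3 * S + (2 + 2 * S) / e)"
  proof (rule mult_left_mono)
    have "2 * S \<le> 2 * S / e" using e S by (simp add: field_simps mult_left_le)
    then show "2 / e + 2 * S \<le> 3 * S + (2 + 2 * S) / e" using S by (simp add: add_divide_distrib)
  qed (use D P in simp)
  also have "\<dots> \<le> D * P * (3 * S + (2 + 2 * S) / e) * (n * m)"
  proof -
    have "1 \<le> n * m" using n m by (metis mult_mono' mult_1 zero_le_one order_trans)
    moreover have "0 \<le> D * P * (3 * S + (2 + 2 * S) / e)" using D P S e by simp
    ultimately show ?thesis using mult_left_mono by fastforce
  qed
  finally show ?thesis by (simp add: D_def field_simps)
qed

lemma cell_idx_less: "1 \<le> k \<Longrightarrow> cell_idx k x < k"
  unfolding cell_idx_def by linarith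

lemma cell_idx_bounds:
  assumes x: "0 \<le> x" "x \<le> 1" and k: "k \<ge> 1"
  shows "real (cell_idx k x) \<le> x * real k" "x * real k \<le> real (cell_idx k x) + 1"
proof -
  have xk: "x * real k \<ge> 0" using x by simp
  have fl: "real (nat \<lfloor>x * real k\<rfloor>) \<le> x * real k"
    using xk by (simp add: of_nat_nat)
  show "real (cell_idx k x) \<le> x * real k"
    unfolding cell_idx_def using fl by (simp add: min_def)
  show "x * real k \<le> real (cell_idx k x) + 1"
  proof (cases "nat \<lfloor>x * real k\<rfloor> \<le> k - 1")
    case True
    then have "cell_idx k x = nat \<lfloor>x * real k\<rfloor>" by (simp add: cell_idx_def min_def)
    moreover have "x * real k < real (nat \<lfloor>x * real k\<rfloor>) + 1"
      using xk by (simp add: of_nat_nat)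
    ultimately show ?thesis by simp
  next
    case False
    then have "cell_idx k x = k - 1" by (simp add: cell_idx_def min_def)
    moreover have "x * real k \<le> real k" using x k by (simp add: mult_left_le_one_le)
    ultimately show ?thesis using k by (simp add: of_nat_diff)
  qed
qed

lemma cell_idx_close:
  assumes "0 \<le> x" "x \<le> 1" "0 \<le> x'" "x' \<le> 1" "k \<ge> 1" "cell_idx k x = cell_idx k x'"
  shows "\<bar>x - x'\<bar> \<le> 1 / real k"
proof -
  have "\<bar>x * real k - x' * real k\<bar> \<le> 1"
    using cell_idx_bounds[OF assms(1,2,5)] cell_idx_bounds[OF assms(3,4,5)] assms(6) by linarith
  then have "\<bar>x - x'\<bar> * real k \<le> 1" by (simp add: left_diff_distrib[symmetric] abs_mult)
  then show ?thesis using assms(5) by (simp add: field_simps)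
qed

lemma dist_le_if_same_cell:
  assumes "\<phi> \<in> Phi" "\<phi>' \<in> Phi" "k \<ge> 1" "cell k \<phi> = cell k \<phi>'"
  shows "dist \<phi> \<phi>' \<le> sqrt 2 / real k"
proof -
  obtain a b a' b' where ab: "\<phi> = (a, b)" "\<phi>' = (a', b')" by (cases \<phi>, cases \<phi>')
  have "\<bar>a - a'\<bar> \<le> 1 / real k" "\<bar>b - b'\<bar> \<le> 1 / real k"
    using assms by (auto simp: ab Phi_def cell_def intro!: cell_idx_close)
  then have "(a - a')\<^sup>2 \<le> (1 / real k)\<^sup>2" "(b - b')\<^sup>2 \<le> (1 / real k)\<^sup>2"
    by (metis abs_ge_zero power2_abs power_mono)+
  then have "(a - a')\<^sup>2 + (b - b')\<^sup>2 \<le> 2 * (1 / real k)\<^sup>2" by simp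
  then have "sqrt ((a - a')\<^sup>2 + (b - b')\<^sup>2) \<le> sqrt (2 * (1 / real k)\<^sup>2)"
    by (rule real_sqrt_le_mono)
  also have "\<dots> = sqrt 2 / real k" by (simp add: real_sqrt_mult)
  finally show ?thesis by (simp add: ab dist_Pair_Pair dist_real_def)
qed

locale cocs_setting =
  fixes N M T :: nat and B L \<alpha> :: real
    and avail :: "nat \<Rightarrow> nat \<Rightarrow> nat set"
    and y :: "nat \<Rightarrow> nat \<Rightarrow> real" and c :: "nat \<Rightarrow> real \<Rightarrow> real"
    and ctx :: "nat \<Rightarrow> nat \<Rightarrow> nat \<Rightarrow> real \<times> real"
    and p :: "nat \<Rightarrow> nat \<Rightarrow> real \<times> real \<Rightarrow> real"
    and sopt :: "nat \<Rightarrow> nat \<Rightarrow> nat set"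
    and sel :: "nat \<Rightarrow> (nat \<times> nat \<times> nat \<Rightarrow> bool) \<Rightarrow> nat \<Rightarrow> nat set"
  assumes N: "N \<ge> 1" and M: "M \<ge> 1" and T: "T \<ge> 1" and B: "B > 0"
    and avail: "\<And>m t. m \<in> {1..M} \<Longrightarrow> t \<in> {1..T} \<Longrightarrow> avail m t \<subseteq> {1..N}"
    and c_pos: "\<And>n t. n \<in> {1..N} \<Longrightarrow> t \<in> {1..T} \<Longrightarrow> c n (y n t) > 0"
    and ctx: "\<And>t n m. t \<in> {1..T} \<Longrightarrow> m \<in> {1..M} \<Longrightarrow> n \<in> avail m t \<Longrightarrow> ctx t n m \<in> Phi"
    and p01: "\<And>n m \<phi>. n \<in> {1..N} \<Longrightarrow> m \<in> {1..M} \<Longrightarrow> \<phi> \<in> Phi \<Longrightarrow> p n m \<phi> \<in> {0..1}"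
    and L: "L > 0" and \<alpha>: "\<alpha> > 0"
    and holder: "\<And>n m \<phi> \<phi>'. n \<in> {1..N} \<Longrightarrow> m \<in> {1..M} \<Longrightarrow> \<phi> \<in> Phi \<Longrightarrow> \<phi>' \<in> Phi \<Longrightarrow>
                   \<bar>p n m \<phi> - p n m \<phi>'\<bar> \<le> L * dist \<phi> \<phi>' powr \<alpha>"
    and feasible_sopt: "\<And>t. t \<in> {1..T} \<Longrightarrow> feasible M B avail (\<lambda>n t. c n (y n t)) t (sopt t)"
    and policy: "is_COCS T M B avail (\<lambda>n t. c n (y n t)) ctx
                   (\<lambda>t. real t powr (2 * \<alpha> / (3 * \<alpha> + 2)) * ln (real t))
                   (nat \<lceil>real T powr ((2 * \<alpha> / (3 * \<alpha> + 2)) / (2 * \<alpha>))\<rceil>) sel"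
begin

abbreviation "cost \<equiv> (\<lambda>n t. c n (y n t))"
abbreviation "z \<equiv> 2 * \<alpha> / (3 * \<alpha> + 2)"
abbreviation "gam \<equiv> z / (2 * \<alpha>)"
abbreviation "K \<equiv> (\<lambda>t. real t powr z * ln (real t))"
abbreviation "h \<equiv> nat \<lceil>real T powr gam\<rceil>"
abbreviation "cmin \<equiv> Min {c n (y n t) | n t. n \<in> {1..N} \<and> t \<in> {1..T}}"
abbreviation "cap \<equiv> B / cmin"
abbreviation "\<Omega> \<equiv> outcomes T N M p ctx"
abbreviation "mean t \<equiv> (\<lambda>n m. p n m (ctx t n m))"

lemma cmin_pos: "cmin > 0" and cmin_le: "n \<in> {1..N} \<Longrightarrow> t \<in> {1..T} \<Longrightarrow> cmin \<le> c n (y n t)"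
proof -
  have eq: "{c n (y n t) | n t. n \<in> {1..N} \<and> t \<in> {1..T}} = (\<lambda>(n, t). c n (y n t)) ` ({1..N} \<times> {1..T})"
    by force
  have fin: "finite {c n (y n t) | n t. n \<in> {1..N} \<and> t \<in> {1..T}}" unfolding eq by simp
  have "{c n (y n t) | n t. n \<in> {1..N} \<and> t \<in> {1..T}} \<noteq> {}" using N T by auto
  from Min_in[OF fin this] c_pos show "cmin > 0" by auto
  show "n \<in> {1..N} \<Longrightarrow> t \<in> {1..T} \<Longrightarrow> cmin \<le> c n (y n t)"
    by (rule Min_le[OF fin]) blast
qed

lemma cap_pos: "cap > 0" using B cmin_pos by simp

lemma feasible_subset:
  "feasible M B avail cost t s \<Longrightarrow> t \<in> {1..T} \<Longrightarrow> m \<in> {1..M} \<Longrightarrow> s m \<subseteq> {1..N}"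
  unfolding feasible_def using avail by blast

lemma feasible_finite:
  "feasible M B avail cost t s \<Longrightarrow> t \<in> {1..T} \<Longrightarrow> m \<in> {1..M} \<Longrightarrow> finite (s m)"
  using feasible_subset by (meson finite_atLeastAtMost finite_subset)

lemma card_feasible_le:
  assumes "feasible M B avail cost t s" "t \<in> {1..T}" "m \<in> {1..M}"
  shows "real (card (s m)) \<le> cap"
proof -
  have "real (card (s m)) * cmin = (\<Sum>n\<in>s m. cmin)" by simp
  also have "\<dots> \<le> (\<Sum>n\<in>s m. cost n t)"
    using feasible_subset[OF assms] assms(2) by (intro sum_mono cmin_le) auto
  also have "\<dots> \<le> B" using assms unfolding feasible_def by auto
  finally show ?thesis using cmin_pos by (simp add: field_simps)
qed

lemma util_diff_le:
  assumes "feasible M B avail cost t s" "t \<in> {1..T}" "\<epsilon> \<ge> 0"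
    and "\<And>m n. m \<in> {1..M} \<Longrightarrow> n \<in> s m \<Longrightarrow> w1 n m - w2 n m \<le> \<epsilon>"
  shows "util M s w1 - util M s w2 \<le> cap * \<epsilon>"
proof -
  have "util M s w1 - util M s w2 = (1 / real M) * (\<Sum>m\<in>{1..M}. \<Sum>n\<in>s m. w1 n m - w2 n m)"
    by (simp add: util_def sum_subtractf right_diff_distrib)
  also have "\<dots> \<le> (1 / real M) * (\<Sum>m\<in>{1..M}. cap * \<epsilon>)"
  proof (intro mult_left_mono sum_mono)
    fix m assume m: "m \<in> {1..M}"
    have "(\<Sum>n\<in>s m. w1 n m - w2 n m) \<le> real (card (s m)) * \<epsilon>"
      using assms(4)[OF m] sum_mono[of "s m" "\<lambda>n. w1 n m - w2 n m" "\<lambda>_. \<epsilon>"] by simp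
    also have "\<dots> \<le> cap * \<epsilon>"
      using card_feasible_le[OF assms(1,2) m] assms(3) by (intro mult_right_mono) auto
    finally show "(\<Sum>n\<in>s m. w1 n m - w2 n m) \<le> cap * \<epsilon>" .
  qed simp
  also have "\<dots> = cap * \<epsilon>" using M by simp
  finally show ?thesis .
qed

lemma util_nonneg:
  "(\<And>m n. m \<in> {1..M} \<Longrightarrow> n \<in> s m \<Longrightarrow> w n m \<ge> 0) \<Longrightarrow> util M s w \<ge> 0"
  unfolding util_def by (intro mult_nonneg_nonneg sum_nonneg) auto

lemma util_le_cap:
  assumes "feasible M B avail cost t s" "t \<in> {1..T}"
    and "\<And>m n. m \<in> {1..M} \<Longrightarrow> n \<in> s m \<Longrightarrow> w n m \<le> 1"
  shows "util M s w \<le> cap"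
  using util_diff_le[OF assms(1,2), of 1 w "\<lambda>_ _. 0"] assms(3) by (simp add: util_def)

lemma mean_bounds:
  assumes "t \<in> {1..T}" "m \<in> {1..M}" "n \<in> avail m t"
  shows "0 \<le> mean t n m" "mean t n m \<le> 1"
  using p01[OF _ assms(2) ctx[OF assms]] avail[OF assms(2,1)] assms(3) by auto

lemma sel_determined_before: "t \<in> {1..T} \<Longrightarrow> determined_before t (sel t)"
  using policy unfolding is_COCS_def determined_before_def by blast

lemma sel_cocs_choice: "t \<in> {1..T} \<Longrightarrow> cocs_choice M B avail cost ctx K h sel t w (sel t w)"
  using policy unfolding is_COCS_def by blast

lemma feasible_sel: "t \<in> {1..T} \<Longrightarrow> feasible M B avail cost t (sel t w)"
  using sel_cocs_choice[of t w] unfolding cocs_choice_def Let_def by (auto split: if_splits)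

lemma sel_subset_avail: "t \<in> {1..T} \<Longrightarrow> m \<in> {1..M} \<Longrightarrow> sel t w m \<subseteq> avail m t"
  using feasible_sel[of t w] unfolding feasible_def by blast

lemma finite_set_outcomes: "finite (set_pmf \<Omega>)"
  unfolding outcomes_def by (rule finite_set_Pi_pmf) auto

lemma integrable_outcomes [simp, intro]: "integrable (measure_pmf \<Omega>) (f :: _ \<Rightarrow> real)"
  by (rule integrable_measure_pmf_finite[OF finite_set_outcomes])

lemma expectation_resample_outcome:
  assumes t: "t \<in> {1..T}" and m: "m \<in> {1..M}" and n: "n \<in> avail m t"
  shows "measure_pmf.expectation \<Omega> F =
         measure_pmf.expectation \<Omega> (\<lambda>w. mean t n m * F (w((t, n, m) := True))
                                     + (1 - mean t n m) * F (w((t, n, m) := False)))"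
proof -
  have a: "(t, n, m) \<in> {1..T} \<times> {1..N} \<times> {1..M}" using t avail[OF m t] n m by auto
  show ?thesis
    unfolding outcomes_def
    by (subst expectation_Pi_pmf_resample[OF _ a]) (use mean_bounds[OF t m n] in auto)
qed

lemma expectation_util_outcomes:
  assumes t: "t \<in> {1..T}" and S: "determined_before t S"
    and fe: "\<And>w. feasible M B avail cost t (S w)"
  shows "measure_pmf.expectation \<Omega> (\<lambda>w. util M (S w) (Xof w t)) =
         measure_pmf.expectation \<Omega> (\<lambda>w. util M (S w) (mean t))"
proof -
  have util_eq: "util M (S w) g =
      (1 / real M) * (\<Sum>m\<in>{1..M}. \<Sum>n\<in>{1..N}. if n \<in> S w m then g n m else 0)"
    for w and g :: "nat \<Rightarrow> nat \<Rightarrow> real"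
    unfolding util_def using feasible_subset[OF fe t]
    by (simp add: sum.inter_restrict[symmetric] Int_absorb1)
  have "measure_pmf.expectation \<Omega> (\<lambda>w. if n \<in> S w m then Xof w t n m else 0) =
        measure_pmf.expectation \<Omega> (\<lambda>w. if n \<in> S w m then mean t n m else 0)"
    if m: "m \<in> {1..M}" for n m
  proof (cases "n \<in> avail m t")
    case False
    then have "n \<notin> S w m" for w using fe[of w] m unfolding feasible_def by auto
    then show ?thesis by simp
  next
    case True
    have "S (w((t, n, m) := b)) = S w" for w b
      by (rule determined_before_fun_upd[OF S]) simp
    then have "mean t n m * (if n \<in> S (w((t, n, m) := True)) m then Xof (w((t, n, m) := True)) t n m else 0)
        + (1 - mean t n m) * (if n \<in> S (w((t, n, m) := False)) m then Xof (w((t, n, m) := False)) t n m else 0)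
        = (if n \<in> S w m then mean t n m else 0)" for w
      by (simp add: Xof_def)
    then show ?thesis
      by (subst expectation_resample_outcome[OF t m True]) (simp only:)
  qed
  then show ?thesis
    unfolding util_eq by (simp del: of_nat_Suc)
qed

section \<open>Concentration of the cell-wise estimates\<close>

definition selected_in_cell :: "nat \<Rightarrow> nat \<Rightarrow> nat \<times> nat \<Rightarrow> nat \<Rightarrow> (nat \<times> nat \<times> nat \<Rightarrow> bool) \<Rightarrow> bool" where
  "selected_in_cell n m l t w \<longleftrightarrow> n \<in> sel t w m \<and> cell h (ctx t n m) = l"

definition deviation where
  "deviation n m l t w = real (succ_cnt sel ctx h t n m l w)
     - (\<Sum>t'\<in>{t'\<in>{1..<t}. selected_in_cell n m l t' w}. mean t' n m)"

definition exp_supermartingale where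
  "exp_supermartingale n m l lam j w = exp (\<Sum>t'\<in>{1..<j}. if selected_in_cell n m l t' w
       then lam * (Xof w t' n m - mean t' n m) - lam\<^sup>2 / 8 else 0)"

lemma cnt_eq_card_selected: "cnt sel ctx h t n m l w = card {t'\<in>{1..<t}. selected_in_cell n m l t' w}"
  by (simp add: cnt_def selected_in_cell_def)

lemma selected_in_cell_determined_before:
  "t \<in> {1..T} \<Longrightarrow> determined_before t (selected_in_cell n m l t)"
  using sel_determined_before[of t] unfolding determined_before_def selected_in_cell_def by metis

lemma exp_supermartingale_determined_before:
  assumes "j \<le> T + 1"
  shows "determined_before j (exp_supermartingale n m l lam j)"
  unfolding determined_before_def
proof (intro allI impI)
  fix w w' :: "nat \<times> nat \<times> nat \<Rightarrow> bool"
  assume agree: "\<forall>t' n m. t' < j \<longrightarrow> w (t', n, m) = w' (t', n, m)"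
  have "selected_in_cell n m l t' w = selected_in_cell n m l t' w'" "Xof w t' n m = Xof w' t' n m"
    if "t' \<in> {1..<j}" for t'
    using selected_in_cell_determined_before[of t'] agree that assms
    unfolding determined_before_def by (auto simp: Xof_def)
  then show "exp_supermartingale n m l lam j w = exp_supermartingale n m l lam j w'"
    unfolding exp_supermartingale_def by (intro arg_cong[where f=exp] sum.cong) auto
qed

lemma exp_supermartingale_Suc:
  "j \<ge> 1 \<Longrightarrow> exp_supermartingale n m l lam (Suc j) w = exp_supermartingale n m l lam j w *
     exp (if selected_in_cell n m l j w then lam * (Xof w j n m - mean j n m) - lam\<^sup>2 / 8 else 0)"
  unfolding exp_supermartingale_def by (simp add: exp_add[symmetric] add.commute)

lemma exp_supermartingale_resample_le:
  assumes j: "j \<in> {1..T}" and m: "m \<in> {1..M}" and n: "n \<in> avail m j"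
  shows "mean j n m * exp_supermartingale n m l lam (Suc j) (w((j, n, m) := True))
         + (1 - mean j n m) * exp_supermartingale n m l lam (Suc j) (w((j, n, m) := False))
         \<le> exp_supermartingale n m l lam j w"
proof -
  define q where "q = mean j n m"
  have q: "0 \<le> q" "q \<le> 1" unfolding q_def using mean_bounds[OF j m n] by auto
  have upd: "exp_supermartingale n m l lam (Suc j) (w((j, n, m) := b)) = exp_supermartingale n m l lam j w *
       exp (if selected_in_cell n m l j w then lam * (of_bool b - q) - lam\<^sup>2 / 8 else 0)" for b
  proof -
    have "exp_supermartingale n m l lam j (w((j, n, m) := b)) = exp_supermartingale n m l lam j w"
      by (rule determined_before_fun_upd[OF exp_supermartingale_determined_before]) (use j in auto)
    moreover have "selected_in_cell n m l j (w((j, n, m) := b)) = selected_in_cell n m l j w"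
      by (rule determined_before_fun_upd[OF selected_in_cell_determined_before[OF j]]) simp
    ultimately show ?thesis
      using exp_supermartingale_Suc[of j n m l lam "w((j, n, m) := b)"] j by (simp add: Xof_def q_def)
  qed
  have "q * exp (lam * (1 - q) - lam\<^sup>2 / 8) + (1 - q) * exp (lam * (0 - q) - lam\<^sup>2 / 8)
        = (q * exp (lam * (1 - q)) + (1 - q) * exp (- lam * q)) * exp (- (lam\<^sup>2 / 8))"
    by (simp add: algebra_simps flip: exp_add)
  also have "\<dots> \<le> exp (lam\<^sup>2 / 8) * exp (- (lam\<^sup>2 / 8))"
    by (intro mult_right_mono bernoulli_mgf_le_hoeffding q) auto
  finally have le1: "q * exp (lam * (1 - q) - lam\<^sup>2 / 8) + (1 - q) * exp (lam * (0 - q) - lam\<^sup>2 / 8) \<le> 1"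
    by (simp flip: exp_add)
  show ?thesis
  proof (cases "selected_in_cell n m l j w")
    case True
    then have "mean j n m * exp_supermartingale n m l lam (Suc j) (w((j, n, m) := True))
         + (1 - mean j n m) * exp_supermartingale n m l lam (Suc j) (w((j, n, m) := False))
         = exp_supermartingale n m l lam j w
           * (q * exp (lam * (1 - q) - lam\<^sup>2 / 8) + (1 - q) * exp (lam * (0 - q) - lam\<^sup>2 / 8))"
      unfolding upd q_def[symmetric] by (simp add: algebra_simps)
    also have "\<dots> \<le> exp_supermartingale n m l lam j w"
      using mult_left_mono[OF le1, of "exp_supermartingale n m l lam j w"] by (simp add: exp_supermartingale_def)
    finally show ?thesis .
  qed (simp add: upd q_def[symmetric] algebra_simps)
qed

lemma expectation_exp_supermartingale_le:
  assumes "j \<le> T + 1" "m \<in> {1..M}"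
  shows "measure_pmf.expectation \<Omega> (exp_supermartingale n m l lam j) \<le> 1"
  using assms(1)
proof (induction j)
  case 0
  then show ?case by (simp add: exp_supermartingale_def)
next
  case (Suc j)
  show ?case
  proof (cases "j = 0")
    case True
    then show ?thesis by (simp add: exp_supermartingale_def)
  next
    case False
    then have j: "j \<in> {1..T}" using Suc.prems by auto
    have IH: "measure_pmf.expectation \<Omega> (exp_supermartingale n m l lam j) \<le> 1" using Suc by simp
    show ?thesis
    proof (cases "n \<in> avail m j")
      case False
      then have "\<not> selected_in_cell n m l j w" for w
        using sel_subset_avail[OF j assms(2)] unfolding selected_in_cell_def by blast
      then have "exp_supermartingale n m l lam (Suc j) = exp_supermartingale n m l lam j"
        using exp_supermartingale_Suc[of j] j by (auto simp: fun_eq_iff)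
      then show ?thesis using IH by simp
    next
      case True
      have "measure_pmf.expectation \<Omega> (exp_supermartingale n m l lam (Suc j))
            \<le> measure_pmf.expectation \<Omega> (exp_supermartingale n m l lam j)"
        by (subst expectation_resample_outcome[OF j assms(2) True])
           (intro integral_mono exp_supermartingale_resample_le[OF j assms(2) True] integrable_outcomes)
      then show ?thesis using IH by simp
    qed
  qed
qed

lemma exp_supermartingale_eq:
  "exp_supermartingale n m l lam t w = exp (lam * deviation n m l t w - lam\<^sup>2 / 8 * real (cnt sel ctx h t n m l w))"
proof -
  let ?S = "{t'\<in>{1..<t}. selected_in_cell n m l t' w}"
  have "(\<Sum>t'\<in>?S. Xof w t' n m) = (\<Sum>t'\<in>?S. of_bool (w (t', n, m)))"
    by (intro sum.cong) (auto simp: Xof_def)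
  also have "\<dots> = real (card (?S \<inter> {t'. w (t', n, m)}))" by (rule sum_of_bool_eq) auto
  also have "?S \<inter> {t'. w (t', n, m)}
      = {t'\<in>{1..<t}. n \<in> sel t' w m \<and> cell h (ctx t' n m) = l \<and> w (t', n, m)}"
    by (auto simp: selected_in_cell_def)
  finally have succ: "(\<Sum>t'\<in>?S. Xof w t' n m) = real (succ_cnt sel ctx h t n m l w)"
    by (simp add: succ_cnt_def)
  have "(\<Sum>t'\<in>{1..<t}. if selected_in_cell n m l t' w
          then lam * (Xof w t' n m - mean t' n m) - lam\<^sup>2 / 8 else 0)
        = (\<Sum>t'\<in>?S. lam * (Xof w t' n m - mean t' n m) - lam\<^sup>2 / 8)"
    by (subst sum.inter_filter) auto
  also have "\<dots> = lam * ((\<Sum>t'\<in>?S. Xof w t' n m) - (\<Sum>t'\<in>?S. mean t' n m)) - lam\<^sup>2 / 8 * real (card ?S)"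
    by (simp add: sum_subtractf sum_distrib_left right_diff_distrib)
  finally show ?thesis
    unfolding exp_supermartingale_def deviation_def cnt_eq_card_selected succ by simp
qed

lemma deviation_tail_bound:
  assumes "t \<in> {1..T}" "m \<in> {1..M}"
  shows "measure_pmf.expectation \<Omega>
          (\<lambda>w. of_bool (a \<le> lam * deviation n m l t w - lam\<^sup>2 / 8 * real (cnt sel ctx h t n m l w)))
         \<le> exp (- a)"
proof -
  have "of_bool (a \<le> lam * deviation n m l t w - lam\<^sup>2 / 8 * real (cnt sel ctx h t n m l w))
        \<le> exp (- a) * exp_supermartingale n m l lam t w" for w
    unfolding exp_supermartingale_eq by (auto simp: mult_exp_exp)
  then have "measure_pmf.expectation \<Omega>
          (\<lambda>w. of_bool (a \<le> lam * deviation n m l t w - lam\<^sup>2 / 8 * real (cnt sel ctx h t n m l w)))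
        \<le> measure_pmf.expectation \<Omega> (\<lambda>w. exp (- a) * exp_supermartingale n m l lam t w)"
    by (intro integral_mono) auto
  also have "\<dots> \<le> exp (- a)"
    using expectation_exp_supermartingale_le[of t m n l lam] assms
    by (simp add: mult_left_le)
  finally show ?thesis .
qed

abbreviation "radius \<equiv> (\<lambda>t::nat. real t powr (- (z / 2)))"

definition bad_round where
  "bad_round t w \<longleftrightarrow> (\<exists>m\<in>{1..M}. \<exists>n\<in>avail m t.
      real (cnt sel ctx h t n m (cell h (ctx t n m)) w) > K t \<and>
      \<bar>deviation n m (cell h (ctx t n m)) t w\<bar> > radius t * real (cnt sel ctx h t n m (cell h (ctx t n m)) w))"

definition tail_event where
  "tail_event lam t n m w \<longleftrightarrow> 2 * ln (real t) \<le> lam * deviation n m (cell h (ctx t n m)) t w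
      - lam\<^sup>2 / 8 * real (cnt sel ctx h t n m (cell h (ctx t n m)) w)"

lemma radius_sq_mult_K: "1 \<le> t \<Longrightarrow> (radius t)\<^sup>2 * K t = ln (real t)"
proof -
  assume t: "1 \<le> t"
  have "(radius t)\<^sup>2 * K t = real t powr (- (z / 2) + - (z / 2) + z) * ln (real t)"
    by (simp only: power2_eq_square powr_add mult.assoc)
  also have "- (z / 2) + - (z / 2) + z = 0" by linarith
  finally show ?thesis using t by simp
qed

lemma bad_round_imp_tail_event:
  assumes t: "t \<in> {1..T}" and bad: "bad_round t w"
  shows "\<exists>m\<in>{1..M}. \<exists>n\<in>{1..N}. tail_event (4 * radius t) t n m w \<or> tail_event (- 4 * radius t) t n m w"
proof -
  obtain m n where m: "m \<in> {1..M}" and n: "n \<in> avail m t"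
    and kK: "K t < real (cnt sel ctx h t n m (cell h (ctx t n m)) w)"
    and dk: "radius t * real (cnt sel ctx h t n m (cell h (ctx t n m)) w)
               < \<bar>deviation n m (cell h (ctx t n m)) t w\<bar>"
    using bad unfolding bad_round_def by blast
  have "0 < radius t" using t by simp
  from large_deviation_tilt[OF this radius_sq_mult_K less_imp_le[OF kK] dk] t
  have "tail_event (4 * radius t) t n m w \<or> tail_event (- 4 * radius t) t n m w"
    by (simp only: tail_event_def atLeastAtMost_iff)
  then show ?thesis using m n avail[OF m t] by blast
qed

lemma expectation_bad_round_le:
  assumes t: "t \<in> {1..T}"
  shows "measure_pmf.expectation \<Omega> (\<lambda>w. of_bool (bad_round t w)) \<le> 2 * real N * real M / (real t)\<^sup>2"
proof -
  define r where "r = radius t"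
  define G where "G w = (\<Sum>m\<in>{1..M}. \<Sum>n\<in>{1..N}.
      of_bool (tail_event (4 * r) t n m w) + of_bool (tail_event (- 4 * r) t n m w) :: real)" for w
  have "of_bool (bad_round t w) \<le> G w" for w
  proof (cases "bad_round t w")
    case True
    then obtain m n where m: "m \<in> {1..M}" and n: "n \<in> {1..N}"
      and "tail_event (4 * r) t n m w \<or> tail_event (- 4 * r) t n m w"
      using bad_round_imp_tail_event[OF t] unfolding r_def by blast
    then have "1 \<le> of_bool (tail_event (4 * r) t n m w) + (of_bool (tail_event (- 4 * r) t n m w) :: real)"
      by auto
    also have "\<dots> \<le> (\<Sum>n\<in>{1..N}. of_bool (tail_event (4 * r) t n m w) + of_bool (tail_event (- 4 * r) t n m w))"
      using n by (intro member_le_sum) auto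
    also have "\<dots> \<le> G w"
      unfolding G_def using m by (intro member_le_sum sum_nonneg) auto
    finally show ?thesis using True by simp
  next
    case False
    have "0 \<le> G w" unfolding G_def by (intro sum_nonneg add_nonneg_nonneg) auto
    with False show ?thesis by simp
  qed
  then have "measure_pmf.expectation \<Omega> (\<lambda>w. of_bool (bad_round t w)) \<le> measure_pmf.expectation \<Omega> G"
    by (intro integral_mono) auto
  also have "\<dots> = (\<Sum>m\<in>{1..M}. \<Sum>n\<in>{1..N}.
      measure_pmf.expectation \<Omega> (\<lambda>w. of_bool (tail_event (4 * r) t n m w)) +
      measure_pmf.expectation \<Omega> (\<lambda>w. of_bool (tail_event (- 4 * r) t n m w)))"
    unfolding G_def
    by (simp only: Bochner_Integration.integral_sum Bochner_Integration.integral_add integrable_outcomes)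
  also have "\<dots> \<le> (\<Sum>m\<in>{1..M}. \<Sum>n\<in>{1..N}. 2 * exp (- (2 * ln (real t))))"
  proof (intro sum_mono)
    fix m n assume m: "m \<in> {1..M}"
    have "measure_pmf.expectation \<Omega> (\<lambda>w. of_bool (tail_event lam t n m w)) \<le> exp (- (2 * ln (real t)))"
      for lam unfolding tail_event_def by (rule deviation_tail_bound[OF t m])
    from this[of "4 * r"] this[of "- 4 * r"]
    show "measure_pmf.expectation \<Omega> (\<lambda>w. of_bool (tail_event (4 * r) t n m w)) +
          measure_pmf.expectation \<Omega> (\<lambda>w. of_bool (tail_event (- 4 * r) t n m w))
          \<le> 2 * exp (- (2 * ln (real t)))" by linarith
  qed
  also have "\<dots> = 2 * real N * real M / (real t)\<^sup>2"
    using exp_neg_2_ln[of "real t"] t by simp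
  finally show ?thesis .
qed

section \<open>Discretisation error\<close>

lemma T_powr_gam_ge_1: "real T powr gam \<ge> 1"
  using T \<alpha> by (simp add: ge_one_powr_ge_zero)

lemma h_bounds: "real T powr gam \<le> real h" "real h \<le> 2 * real T powr gam"
proof -
  have "real h = of_int \<lceil>real T powr gam\<rceil>" using T_powr_gam_ge_1 by (simp add: of_nat_nat)
  then show "real T powr gam \<le> real h" "real h \<le> 2 * real T powr gam"
    using T_powr_gam_ge_1 by linarith+
qed

lemma h_ge_1: "h \<ge> 1"
  using h_bounds(1) T_powr_gam_ge_1 by linarith

lemma gam_mult_alpha: "gam * \<alpha> = z / 2"
proof -
  have "gam * \<alpha> = z * (\<alpha> / (2 * \<alpha>))"
    by (simp only: times_divide_eq_right divide_divide_eq_left mult.commute)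
  also have "\<alpha> / (2 * \<alpha>) = 1 / 2" using \<alpha> by simp
  finally show ?thesis by simp
qed

lemma cell_diam_powr_le: "(sqrt 2 / real h) powr \<alpha> \<le> 2 powr (\<alpha> / 2) * real T powr (- (z / 2))"
proof -
  define X where "X = real T powr gam"
  have X: "X > 0" "X \<le> real h" using T_powr_gam_ge_1 h_bounds(1) unfolding X_def by linarith+
  have "sqrt 2 / real h \<le> sqrt 2 / X"
    by (rule frac_le) (use X in auto)
  moreover have "0 \<le> sqrt 2 / real h"
    by (intro divide_nonneg_nonneg of_nat_0_le_iff) simp
  ultimately have "(sqrt 2 / real h) powr \<alpha> \<le> (sqrt 2 / X) powr \<alpha>"
    using \<alpha> by (intro powr_mono2) auto
  also have "\<dots> = sqrt 2 powr \<alpha> / X powr \<alpha>"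
    by (rule powr_divide)
  also have "sqrt 2 powr \<alpha> = 2 powr (\<alpha> / 2)"
    by (simp add: powr_half_sqrt[symmetric] powr_powr)
  also have "X powr \<alpha> = real T powr (gam * \<alpha>)"
    unfolding X_def by (simp only: powr_powr)
  also have "gam * \<alpha> = z / 2" by (rule gam_mult_alpha)
  also have "2 powr (\<alpha> / 2) / real T powr (z / 2) = 2 powr (\<alpha> / 2) * real T powr (- (z / 2))"
    by (simp only: powr_minus divide_inverse)
  finally show ?thesis .
qed

abbreviation "disc_err \<equiv> L * 2 powr (\<alpha> / 2) * real T powr (- (z / 2))"

lemma mean_diff_same_cell_le:
  assumes t: "t \<in> {1..T}" and t': "t' \<in> {1..T}" and m: "m \<in> {1..M}"
    and n: "n \<in> avail m t" and n': "n \<in> avail m t'"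
    and same: "cell h (ctx t' n m) = cell h (ctx t n m)"
  shows "\<bar>mean t' n m - mean t n m\<bar> \<le> disc_err"
proof -
  have \<phi>: "ctx t' n m \<in> Phi" "ctx t n m \<in> Phi" using ctx t t' m n n' by auto
  have "dist (ctx t' n m) (ctx t n m) powr \<alpha> \<le> (sqrt 2 / real h) powr \<alpha>"
    using dist_le_if_same_cell[OF \<phi> h_ge_1 same] \<alpha> by (intro powr_mono2) auto
  also have "\<dots> \<le> 2 powr (\<alpha> / 2) * real T powr (- (z / 2))" by (rule cell_diam_powr_le)
  finally have "L * dist (ctx t' n m) (ctx t n m) powr \<alpha> \<le> disc_err"
    using L mult_left_mono by (fastforce simp: mult.assoc)
  then show ?thesis
    using holder[OF _ m \<phi>] avail[OF m t] n by fastforce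
qed

text \<open>The estimate is the empirical mean over past rounds in the same cell, so its error splits
  into the martingale deviation and the drift of the mean within the cell.\<close>
lemma estimate_error_le:
  assumes t: "t \<in> {1..T}" and m: "m \<in> {1..M}" and n: "n \<in> avail m t"
    and k: "real (cnt sel ctx h t n m (cell h (ctx t n m)) w) > K t"
    and d: "\<bar>deviation n m (cell h (ctx t n m)) t w\<bar>
              \<le> radius t * real (cnt sel ctx h t n m (cell h (ctx t n m)) w)"
  shows "\<bar>xhat sel ctx h t w n m - mean t n m\<bar> \<le> radius t + disc_err"
proof -
  define l where "l = cell h (ctx t n m)"
  define S where "S = {t'\<in>{1..<t}. selected_in_cell n m l t' w}"
  define k where "k = real (card S)"
  have k_eq: "k = real (cnt sel ctx h t n m l w)" by (simp only: k_def S_def cnt_eq_card_selected)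
  have "K t \<ge> 0" using t by simp
  then have kpos: "k > 0" using k unfolding k_eq l_def by linarith
  have dec: "xhat sel ctx h t w n m - mean t n m
        = deviation n m l t w / k + (\<Sum>t'\<in>S. mean t' n m - mean t n m) / k"
    using kpos unfolding xhat_def phat_def deviation_def k_eq[symmetric] S_def[symmetric] l_def[symmetric]
    by (simp add: sum_subtractf k_def field_simps)
  have dev: "\<bar>deviation n m l t w\<bar> / k \<le> radius t"
    using d kpos unfolding k_eq l_def by (simp add: field_simps)
  have drift: "\<bar>\<Sum>t'\<in>S. mean t' n m - mean t n m\<bar> / k \<le> disc_err"
  proof -
    have "\<bar>mean t' n m - mean t n m\<bar> \<le> disc_err" if "t' \<in> S" for t'
    proof -
      have t': "t' \<in> {1..T}" using that t by (auto simp: S_def)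
      have "n \<in> sel t' w m" "cell h (ctx t' n m) = cell h (ctx t n m)"
        using that by (auto simp: S_def selected_in_cell_def l_def)
      then show ?thesis
        using mean_diff_same_cell_le[OF t t' m n] sel_subset_avail[OF t' m] by blast
    qed
    then have "(\<Sum>t'\<in>S. \<bar>mean t' n m - mean t n m\<bar>) \<le> k * disc_err"
      unfolding k_def using sum_mono[of S "\<lambda>t'. \<bar>mean t' n m - mean t n m\<bar>" "\<lambda>_. disc_err"] by simp
    then have "\<bar>\<Sum>t'\<in>S. mean t' n m - mean t n m\<bar> \<le> k * disc_err"
      using sum_abs[of "\<lambda>t'. mean t' n m - mean t n m" S] by linarith
    then show ?thesis using kpos by (simp add: field_simps)
  qed
  have "\<bar>xhat sel ctx h t w n m - mean t n m\<bar>
        \<le> \<bar>deviation n m l t w / k\<bar> + \<bar>(\<Sum>t'\<in>S. mean t' n m - mean t n m) / k\<bar>"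
    unfolding dec by (rule abs_triangle_ineq)
  also have "\<dots> = \<bar>deviation n m l t w\<bar> / k + \<bar>\<Sum>t'\<in>S. mean t' n m - mean t n m\<bar> / k"
    using kpos by simp
  finally show ?thesis using dev drift by linarith
qed

lemma estimate_error_le_if_explored:
  assumes t: "t \<in> {1..T}" and m: "m \<in> {1..M}" and n: "n \<in> avail m t"
    and explored: "(n, m) \<notin> under_explored M avail sel ctx K h t w" and good: "\<not> bad_round t w"
  shows "\<bar>xhat sel ctx h t w n m - mean t n m\<bar> \<le> radius t + disc_err"
proof (rule estimate_error_le[OF t m n])
  show k: "real (cnt sel ctx h t n m (cell h (ctx t n m)) w) > K t"
    using explored m n unfolding under_explored_def by auto
  show "\<bar>deviation n m (cell h (ctx t n m)) t w\<bar>
      \<le> radius t * real (cnt sel ctx h t n m (cell h (ctx t n m)) w)"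
    using good k m n unfolding bad_round_def by force
qed

definition explore_round where
  "explore_round t w \<longleftrightarrow> (\<exists>m\<in>{1..M}. \<exists>n\<in>sel t w m. (n, m) \<in> under_explored M avail sel ctx K h t w)"

text \<open>If COCS selects no under-explored pair although one exists, maximality of the number of
  selected under-explored pairs forces the oracle decision to contain none either; the oracle
  decision is then a competitor in the second maximisation.\<close>
lemma sel_dominates_sopt_when_exploiting:
  assumes t: "t \<in> {1..T}" and expl: "\<not> explore_round t w"
  defines "U \<equiv> under_explored M avail sel ctx K h t w" and "xh \<equiv> xhat sel ctx h t w"
  shows "(\<forall>m\<in>{1..M}. \<forall>n\<in>sopt t m. (n, m) \<notin> U) \<and> util M (sopt t) xh \<le> util M (sel t w) xh"
proof (cases "U = {}")
  case True
  then show ?thesis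
    using sel_cocs_choice[OF t, of w] feasible_sopt[OF t]
    unfolding cocs_choice_def Let_def U_def xh_def by auto
next
  case False
  have choice: "\<forall>s'. feasible M B avail cost t s' \<longrightarrow> num_ue M U s' \<le> num_ue M U (sel t w)"
    "\<forall>s'. feasible M B avail cost t s' \<and> (\<forall>m\<in>{1..M}. {n\<in>s' m. (n, m) \<in> U} = {n\<in>sel t w m. (n, m) \<in> U})
          \<longrightarrow> util M s' xh \<le> util M (sel t w) xh"
    using sel_cocs_choice[OF t, of w] False unfolding cocs_choice_def Let_def U_def xh_def by auto
  have sel_explored: "(n, m) \<notin> U" if "m \<in> {1..M}" "n \<in> sel t w m" for n m
    using expl that unfolding explore_round_def U_def by blast
  then have "{(n, m). m \<in> {1..M} \<and> n \<in> sel t w m \<and> (n, m) \<in> U} = {}" by auto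
  then have "num_ue M U (sel t w) = 0" unfolding num_ue_def by (simp only: card.empty)
  then have "num_ue M U (sopt t) = 0" using choice(1) feasible_sopt[OF t] by fastforce
  moreover have "finite {(n, m). m \<in> {1..M} \<and> n \<in> sopt t m \<and> (n, m) \<in> U}"
    by (rule finite_subset[of _ "{1..N} \<times> {1..M}"]) (use feasible_subset[OF feasible_sopt[OF t] t] in auto)
  ultimately have sopt_explored: "\<forall>m\<in>{1..M}. \<forall>n\<in>sopt t m. (n, m) \<notin> U"
    unfolding num_ue_def by auto
  then have "\<forall>m\<in>{1..M}. {n\<in>sopt t m. (n, m) \<in> U} = {n\<in>sel t w m. (n, m) \<in> U}"
    using sel_explored by auto
  then show ?thesis using choice(2) feasible_sopt[OF t] sopt_explored by blast
qed

definition round_regret where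
  "round_regret t w = util M (sopt t) (mean t) - util M (sel t w) (mean t)"

lemma round_regret_le:
  assumes t: "t \<in> {1..T}"
  shows "round_regret t w
         \<le> cap * of_bool (explore_round t w) + cap * of_bool (bad_round t w) + 2 * cap * (radius t + disc_err)"
proof -
  define U where "U = under_explored M avail sel ctx K h t w"
  define xh where "xh = xhat sel ctx h t w"
  have err_nonneg: "radius t + disc_err \<ge> 0" using L by simp
  have feo: "feasible M B avail cost t (sopt t)" by (rule feasible_sopt[OF t])
  have fes: "feasible M B avail cost t (sel t w)" by (rule feasible_sel[OF t])
  have sub: "sopt t m \<subseteq> avail m t" "sel t w m \<subseteq> avail m t" if "m \<in> {1..M}" for m
    using feo fes that unfolding feasible_def by blast+
  show ?thesis
  proof (cases "explore_round t w \<or> bad_round t w")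
    case True
    have "util M (sopt t) (mean t) \<le> cap"
      using sub mean_bounds[OF t] by (intro util_le_cap[OF feo t]) blast
    moreover have "util M (sel t w) (mean t) \<ge> 0"
      using sub mean_bounds[OF t] by (intro util_nonneg) blast
    moreover have "cap \<le> cap * of_bool (explore_round t w) + cap * of_bool (bad_round t w)"
      using True cap_pos by auto
    moreover have "0 \<le> 2 * cap * (radius t + disc_err)"
      using cap_pos err_nonneg by (intro mult_nonneg_nonneg) auto
    ultimately show ?thesis unfolding round_regret_def by linarith
  next
    case False
    have dom: "\<forall>m\<in>{1..M}. \<forall>n\<in>sopt t m. (n, m) \<notin> U" "util M (sopt t) xh \<le> util M (sel t w) xh"
      using sel_dominates_sopt_when_exploiting[OF t] False unfolding U_def xh_def by auto
    have sel_explored: "(n, m) \<notin> U" if "m \<in> {1..M}" "n \<in> sel t w m" for n m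
      using False that unfolding explore_round_def U_def by blast
    have close: "\<bar>xh n m - mean t n m\<bar> \<le> radius t + disc_err"
      if "m \<in> {1..M}" "n \<in> avail m t" "(n, m) \<notin> U" for n m
      using estimate_error_le_if_explored[OF t that[unfolded U_def]] False unfolding xh_def by blast
    have "util M (sopt t) (mean t) - util M (sopt t) xh \<le> cap * (radius t + disc_err)"
      using close sub(1) dom(1) by (intro util_diff_le[OF feo t err_nonneg]) fastforce
    moreover have "util M (sel t w) xh - util M (sel t w) (mean t) \<le> cap * (radius t + disc_err)"
      using close sub(2) sel_explored by (intro util_diff_le[OF fes t err_nonneg]) fastforce
    ultimately show ?thesis using dom(2) False unfolding round_regret_def by simp
  qed
qed

section \<open>Counting exploration rounds\<close>

lemma K_mono: "1 \<le> t \<Longrightarrow> t \<le> T \<Longrightarrow> K t \<le> K T"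
  using \<alpha> by (intro mult_mono powr_mono2) auto

lemma cnt_less_if_selected:
  assumes "1 \<le> t1" "t1 < t2" "selected_in_cell n m l t1 w"
  shows "cnt sel ctx h t1 n m l w < cnt sel ctx h t2 n m l w"
proof -
  have "{t'\<in>{1..<t1}. selected_in_cell n m l t' w} \<subset> {t'\<in>{1..<t2}. selected_in_cell n m l t' w}"
    using assms by auto
  then show ?thesis unfolding cnt_eq_card_selected by (intro psubset_card_mono) auto
qed

lemma card_selected_rounds_le:
  "card {t\<in>{1..T}. selected_in_cell n m l t w \<and> real (cnt sel ctx h t n m l w) \<le> K T} \<le> nat \<lfloor>K T\<rfloor> + 1"
proof -
  let ?A = "{t\<in>{1..T}. selected_in_cell n m l t w \<and> real (cnt sel ctx h t n m l w) \<le> K T}"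
  have "inj_on (\<lambda>t. cnt sel ctx h t n m l w) ?A"
    by (intro strict_mono_on_imp_inj_on strict_mono_onI cnt_less_if_selected) auto
  moreover have "(\<lambda>t. cnt sel ctx h t n m l w) ` ?A \<subseteq> {0..nat \<lfloor>K T\<rfloor>}"
    by (auto simp: le_nat_iff le_floor_iff)
  ultimately have "card ?A \<le> card {0..nat \<lfloor>K T\<rfloor>}"
    by (intro card_inj_on_le) auto
  then show ?thesis by simp
qed

lemma card_explore_rounds_le:
  "card {t\<in>{1..T}. explore_round t w} \<le> N * M * (h * h) * (nat \<lfloor>K T\<rfloor> + 1)"
proof -
  define I where "I = {1..N} \<times> {1..M} \<times> ({0..<h} \<times> {0..<h})"
  define A where "A i = (case i of (n, m, l) \<Rightarrow>
      {t\<in>{1..T}. selected_in_cell n m l t w \<and> real (cnt sel ctx h t n m l w) \<le> K T})" for i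
  have "{t\<in>{1..T}. explore_round t w} \<subseteq> (\<Union>i\<in>I. A i)"
  proof
    fix t assume "t \<in> {t\<in>{1..T}. explore_round t w}"
    then obtain m n where t: "t \<in> {1..T}" and m: "m \<in> {1..M}" and n: "n \<in> sel t w m"
      and ue: "(n, m) \<in> under_explored M avail sel ctx K h t w"
      unfolding explore_round_def by blast
    have "n \<in> {1..N}" using sel_subset_avail[OF t m, of w] avail[OF m t] n by blast
    moreover have "cell h (ctx t n m) \<in> {0..<h} \<times> {0..<h}"
      using cell_idx_less[OF h_ge_1] by (simp add: cell_def)
    moreover have "real (cnt sel ctx h t n m (cell h (ctx t n m)) w) \<le> K T"
      using ue K_mono[of t] t unfolding under_explored_def by fastforce
    ultimately have "t \<in> A (n, m, cell h (ctx t n m))" "(n, m, cell h (ctx t n m)) \<in> I"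
      using t m n unfolding A_def I_def selected_in_cell_def by auto
    then show "t \<in> (\<Union>i\<in>I. A i)" by blast
  qed
  then have "card {t\<in>{1..T}. explore_round t w} \<le> card (\<Union>i\<in>I. A i)"
    by (intro card_mono) (auto simp: I_def A_def split: prod.splits)
  also have "\<dots> \<le> (\<Sum>i\<in>I. card (A i))"
    by (rule card_UN_le) (simp add: I_def)
  also have "\<dots> \<le> (\<Sum>i\<in>I. nat \<lfloor>K T\<rfloor> + 1)"
  proof (rule sum_mono)
    fix i :: "nat \<times> nat \<times> nat \<times> nat"
    obtain n m l where "i = (n, m, l)" by (cases i) auto
    then show "card (A i) \<le> nat \<lfloor>K T\<rfloor> + 1"
      by (simp only: A_def prod.case card_selected_rounds_le)
  qed
  also have "\<dots> = N * M * (h * h) * (nat \<lfloor>K T\<rfloor> + 1)"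
    by (simp add: I_def card_cartesian_product)
  finally show ?thesis .
qed

lemma exp_regret_eq_sum_round_regret:
  "exp_regret T M \<Omega> sopt sel = (\<Sum>t=1..T. measure_pmf.expectation \<Omega> (round_regret t))"
  unfolding exp_regret_def
proof (rule sum.cong[OF refl])
  fix t assume t: "t \<in> {1..T}"
  have "determined_before t (\<lambda>w. sopt t)" by (simp add: determined_before_def)
  from expectation_util_outcomes[OF t this feasible_sopt[OF t]]
    expectation_util_outcomes[OF t sel_determined_before[OF t] feasible_sel[OF t]]
  show "measure_pmf.expectation \<Omega> (\<lambda>w. util M (sopt t) (Xof w t)) -
        measure_pmf.expectation \<Omega> (\<lambda>w. util M (sel t w) (Xof w t)) =
        measure_pmf.expectation \<Omega> (round_regret t)"
    unfolding round_regret_def by simp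
qed

lemma sum_expectation_explore_round_le:
  "(\<Sum>t=1..T. measure_pmf.expectation \<Omega> (\<lambda>w. of_bool (explore_round t w) :: real))
   \<le> real (N * M * (h * h) * (nat \<lfloor>K T\<rfloor> + 1))"
proof -
  have "(\<Sum>t=1..T. measure_pmf.expectation \<Omega> (\<lambda>w. of_bool (explore_round t w) :: real))
        = measure_pmf.expectation \<Omega> (\<lambda>w. real (card {t\<in>{1..T}. explore_round t w}))"
    by (simp add: Bochner_Integration.integral_sum[symmetric] sum_of_bool_eq Int_def)
  also have "\<dots> \<le> measure_pmf.expectation \<Omega> (\<lambda>w. real (N * M * (h * h) * (nat \<lfloor>K T\<rfloor> + 1)))"
    by (intro integral_mono integrable_outcomes) (simp only: of_nat_le_iff card_explore_rounds_le)
  finally show ?thesis by simp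
qed

lemma exp_regret_le_sum:
  "exp_regret T M \<Omega> sopt sel
   \<le> cap * real (N * M * (h * h) * (nat \<lfloor>K T\<rfloor> + 1))
     + cap * (\<Sum>t=1..T. 2 * real N * real M / (real t)\<^sup>2)
     + 2 * cap * (\<Sum>t=1..T. radius t + disc_err)"
proof -
  define D where "D = cap"
  define Ex where "Ex t = measure_pmf.expectation \<Omega> (\<lambda>w. of_bool (explore_round t w) :: real)" for t
  define Pb where "Pb t = 2 * real N * real M / (real t)\<^sup>2" for t :: nat
  define \<epsilon> where "\<epsilon> t = radius t + disc_err" for t :: nat
  have D: "D > 0" using cap_pos by (simp add: D_def)
  have "measure_pmf.expectation \<Omega> (round_regret t) \<le> D * Ex t + D * Pb t + 2 * D * \<epsilon> t"
    if t: "t \<in> {1..T}" for t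
  proof -
    have "measure_pmf.expectation \<Omega> (round_regret t) \<le> measure_pmf.expectation \<Omega>
        (\<lambda>w. D * of_bool (explore_round t w) + D * of_bool (bad_round t w) + 2 * D * \<epsilon> t)"
      using round_regret_le[OF t] unfolding D_def \<epsilon>_def
      by (intro integral_mono integrable_outcomes)
    also have "\<dots> = D * Ex t + D * measure_pmf.expectation \<Omega> (\<lambda>w. of_bool (bad_round t w)) + 2 * D * \<epsilon> t"
      unfolding Ex_def by simp
    also have "\<dots> \<le> D * Ex t + D * Pb t + 2 * D * \<epsilon> t"
      using mult_left_mono[OF expectation_bad_round_le[OF t], of D] D unfolding Pb_def by simp
    finally show ?thesis .
  qed
  then have "exp_regret T M \<Omega> sopt sel \<le> (\<Sum>t=1..T. D * Ex t + D * Pb t + 2 * D * \<epsilon> t)"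
    unfolding exp_regret_eq_sum_round_regret by (intro sum_mono) auto
  also have "\<dots> = D * (\<Sum>t=1..T. Ex t) + D * (\<Sum>t=1..T. Pb t) + 2 * D * (\<Sum>t=1..T. \<epsilon> t)"
    by (simp only: sum.distrib sum_distrib_left)
  also have "\<dots> \<le> D * real (N * M * (h * h) * (nat \<lfloor>K T\<rfloor> + 1)) + D * (\<Sum>t=1..T. Pb t) + 2 * D * (\<Sum>t=1..T. \<epsilon> t)"
    using sum_expectation_explore_round_le D unfolding Ex_def by simp
  finally show ?thesis unfolding D_def Pb_def \<epsilon>_def .
qed

abbreviation "rate \<equiv> (2 * \<alpha> + 2) / (3 * \<alpha> + 2)"
abbreviation "rate_cells \<equiv> 2 / (3 * \<alpha> + 2)"

lemma rate_identities: "0 < rate" "rate \<le> 1" "1 - z / 2 = rate" "rate_cells + z = rate" "gam + gam = rate_cells"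
proof -
  have d: "3 * \<alpha> + 2 > 0" and an: "\<alpha> \<noteq> 0" using \<alpha> by simp_all
  show "0 < rate" using \<alpha> by simp
  show "rate \<le> 1" using d \<alpha> by (simp add: field_simps)
  show "1 - z / 2 = rate" using d by (simp add: field_simps)
  show "rate_cells + z = rate" unfolding add_divide_distrib[symmetric] by (simp add: add.commute)
  have "\<alpha> * 4 + \<alpha> * (\<alpha> * 6) > 0" using \<alpha> by (intro add_pos_pos mult_pos_pos) auto
  then have "gam = 1 / (3 * \<alpha> + 2)" using d an by (simp add: field_simps)
  then show "gam + gam = rate_cells" by simp
qed

lemma h_sq_le: "real h * real h \<le> 4 * real T powr rate_cells"
proof -
  have "0 \<le> 2 * real T powr gam" by simp
  then have "real h * real h \<le> (2 * real T powr gam) * (2 * real T powr gam)"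
    using h_bounds(2) by (intro mult_mono) (simp_all only: of_nat_0_le_iff)
  also have "\<dots> = 4 * (real T powr gam * real T powr gam)" by simp
  also have "real T powr gam * real T powr gam = real T powr (gam + gam)" by (simp only: powr_add)
  finally show ?thesis unfolding rate_identities(5) .
qed

lemma exploration_term_le:
  "cap * real (N * M * (h * h) * (nat \<lfloor>K T\<rfloor> + 1))
   \<le> 4 * real N ^ 2 * real M * B / cmin * (ln (real T) * real T powr rate + real T powr rate_cells)"
proof -
  define X where "X = ln (real T) * real T powr rate + real T powr rate_cells"
  have KT: "K T \<ge> 0" using T by simp
  have "real (nat \<lfloor>K T\<rfloor> + 1) \<le> K T + 1" using KT by simp
  from mult_mono[OF h_sq_le this]
  have "real h * real h * real (nat \<lfloor>K T\<rfloor> + 1) \<le> (4 * real T powr rate_cells) * (K T + 1)"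
    by simp
  also have "\<dots> = 4 * (ln (real T) * (real T powr rate_cells * real T powr z) + real T powr rate_cells)"
    by (simp only: ring_distribs mult_ac mult_1_right)
  also have "real T powr rate_cells * real T powr z = real T powr rate"
    by (simp only: powr_add[symmetric] rate_identities(4))
  finally have hK: "real h * real h * real (nat \<lfloor>K T\<rfloor> + 1) \<le> 4 * X" unfolding X_def .
  have X: "X \<ge> 0" using T by (simp add: X_def)
  have "cap * real (N * M * (h * h) * (nat \<lfloor>K T\<rfloor> + 1))
        = cap * real N * real M * (real h * real h * real (nat \<lfloor>K T\<rfloor> + 1))"
    by (simp only: of_nat_mult mult_ac)
  also have "\<dots> \<le> cap * real N * real M * (4 * X)"
    by (intro mult_left_mono[OF hK] mult_nonneg_nonneg less_imp_le[OF cap_pos] of_nat_0_le_iff)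
  also have "\<dots> \<le> cap * real N ^ 2 * real M * (4 * X)"
    using N cap_pos X by (intro mult_right_mono mult_left_mono) (auto simp: power2_eq_square)
  finally show ?thesis unfolding X_def by (simp add: field_simps)
qed

lemma bad_term_le:
  assumes "cap \<ge> 1"
  shows "cap * (\<Sum>t=1..T. 2 * real N * real M / (real t)\<^sup>2)
         \<le> real N * real M * B / cmin * (\<Sum>k=1..nat \<lfloor>B / cmin\<rfloor>. real (N choose k)) * (pi ^ 2 / 3)"
proof -
  define C where "C = (\<Sum>k=1..nat \<lfloor>B / cmin\<rfloor>. real (N choose k))"
  have "(\<Sum>t=1..T. 2 * real N * real M / (real t)\<^sup>2) = 2 * real N * real M * (\<Sum>t=1..T. 1 / (real t)\<^sup>2)"
    by (simp add: sum_distrib_left)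
  also have "\<dots> \<le> 2 * real N * real M * (pi\<^sup>2 / 6)"
    by (intro mult_left_mono sum_inverse_squares_le) auto
  also have "\<dots> = real N * real M * (pi ^ 2 / 3)" by simp
  finally have S: "(\<Sum>t=1..T. 2 * real N * real M / (real t)\<^sup>2) \<le> real N * real M * (pi ^ 2 / 3)" .
  have "real (N choose 1) \<le> C"
    unfolding C_def using assms by (intro member_le_sum) (auto simp: le_nat_iff le_floor_iff)
  then have C: "1 \<le> C" using N by simp
  have "cap * (\<Sum>t=1..T. 2 * real N * real M / (real t)\<^sup>2) \<le> cap * (real N * real M * (pi ^ 2 / 3))"
    using S cap_pos by (intro mult_left_mono) auto
  also have "\<dots> \<le> cap * (real N * real M * (pi ^ 2 / 3)) * C"
  proof -
    have "0 \<le> cap * (real N * real M * (pi ^ 2 / 3))"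
      by (intro mult_nonneg_nonneg less_imp_le[OF cap_pos]) simp_all
    from mult_left_mono[OF C this] show ?thesis by (simp only: mult_1_right)
  qed
  finally show ?thesis unfolding C_def by (simp add: field_simps)
qed

lemma sum_radius_disc_err_le:
  "(\<Sum>t=1..T. radius t + disc_err) \<le> real T powr rate / rate + L * 2 powr (\<alpha> / 2) * real T powr rate"
proof -
  have z: "0 \<le> z / 2" "z / 2 < 1" using \<alpha> by (simp_all add: field_simps)
  have "(\<Sum>t=1..T. radius t + disc_err) = (\<Sum>t=1..T. radius t) + real T * disc_err"
    by (simp add: sum.distrib)
  also have "(\<Sum>t=1..T. radius t) \<le> real T powr rate / rate"
    using sum_powr_neg_le[OF z T] unfolding rate_identities(3) .
  also have "real T * disc_err = L * 2 powr (\<alpha> / 2) * (real T powr 1 * real T powr (- (z / 2)))"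
    using T by simp
  also have "real T powr 1 * real T powr (- (z / 2)) = real T powr rate"
    by (simp only: powr_add[symmetric] diff_conv_add_uminus[symmetric] rate_identities(3))
  finally show ?thesis by simp
qed

lemma estimation_term_le:
  "2 * cap * (\<Sum>t=1..T. radius t + disc_err)
   \<le> (3 * L * 2 powr (\<alpha> / 2) + (2 + 2 * L * 2 powr (\<alpha> / 2)) / rate) * real N * real M * B / cmin * real T powr rate"
  using scaled_error_bound_le[OF B cmin_pos _ _ rate_identities(1,2) _ _ sum_radius_disc_err_le] L N M
  by (simp add: mult.assoc)

lemma exp_regret_nonpos_if_cap_less_1:
  assumes "cap < 1"
  shows "exp_regret T M \<Omega> sopt sel \<le> 0"
proof -
  have sopt_empty: "sopt t m = {}" if t: "t \<in> {1..T}" and m: "m \<in> {1..M}" for t m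
  proof -
    have "card (sopt t m) = 0" using card_feasible_le[OF feasible_sopt[OF t] t m] assms by linarith
    then show ?thesis using feasible_finite[OF feasible_sopt[OF t] t m] by simp
  qed
  have "round_regret t w \<le> 0" if t: "t \<in> {1..T}" for t w
  proof -
    have "util M (sel t w) (mean t) \<ge> 0"
      using mean_bounds[OF t] sel_subset_avail[OF t] by (intro util_nonneg) blast
    then show ?thesis unfolding round_regret_def util_def using sopt_empty[OF t] by simp
  qed
  then have "measure_pmf.expectation \<Omega> (round_regret t) \<le> measure_pmf.expectation \<Omega> (\<lambda>_. 0)"
    if "t \<in> {1..T}" for t
    using that by (intro integral_mono) auto
  then show ?thesis unfolding exp_regret_eq_sum_round_regret by (intro sum_nonpos) auto
qed

lemma exp_regret_bound:
  "exp_regret T M \<Omega> sopt sel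
   \<le> 4 * real N ^ 2 * real M * B / cmin * (ln (real T) * real T powr rate + real T powr rate_cells)
     + real N * real M * B / cmin * (\<Sum>k = 1..nat \<lfloor>B / cmin\<rfloor>. real (N choose k)) * (pi ^ 2 / 3)
     + (3 * L * 2 powr (\<alpha> / 2) + (2 + 2 * L * 2 powr (\<alpha> / 2)) / rate)
       * real N * real M * B / cmin * real T powr rate"
proof (cases "cap < 1")
  case True
  have "0 \<le> 4 * real N ^ 2 * real M * B / cmin * (ln (real T) * real T powr rate + real T powr rate_cells)
     + real N * real M * B / cmin * (\<Sum>k = 1..nat \<lfloor>B / cmin\<rfloor>. real (N choose k)) * (pi ^ 2 / 3)
     + (3 * L * 2 powr (\<alpha> / 2) + (2 + 2 * L * 2 powr (\<alpha> / 2)) / rate)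
       * real N * real M * B / cmin * real T powr rate"
    using B cmin_pos L T \<alpha> rate_identities(1)
    by (intro add_nonneg_nonneg mult_nonneg_nonneg divide_nonneg_nonneg sum_nonneg) auto
  with exp_regret_nonpos_if_cap_less_1[OF True] show ?thesis by linarith
next
  case False
  then show ?thesis
    using exp_regret_le_sum exploration_term_le bad_term_le estimation_term_le by linarith
qed

end

theorem theorem2:
  fixes N M T :: nat and B L \<alpha> :: real
    and avail :: "nat \<Rightarrow> nat \<Rightarrow> nat set"
    and y :: "nat \<Rightarrow> nat \<Rightarrow> real" and c :: "nat \<Rightarrow> real \<Rightarrow> real"
    and ctx :: "nat \<Rightarrow> nat \<Rightarrow> nat \<Rightarrow> real \<times> real"
    and p :: "nat \<Rightarrow> nat \<Rightarrow> real \<times> real \<Rightarrow> real"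
    and sopt :: "nat \<Rightarrow> nat \<Rightarrow> nat set"
    and sel :: "nat \<Rightarrow> (nat \<times> nat \<times> nat \<Rightarrow> bool) \<Rightarrow> nat \<Rightarrow> nat set"
  assumes N: "N \<ge> 1" and M: "M \<ge> 1" and T: "T \<ge> 1" and B: "B > 0"
    and avail: "\<And>m t. m \<in> {1..M} \<Longrightarrow> t \<in> {1..T} \<Longrightarrow> avail m t \<subseteq> {1..N}"
    and c_mono: "\<And>n. n \<in> {1..N} \<Longrightarrow> mono (c n)"
    and c_pos: "\<And>n t. n \<in> {1..N} \<Longrightarrow> t \<in> {1..T} \<Longrightarrow> c n (y n t) > 0"
    and ctx: "\<And>t n m. t \<in> {1..T} \<Longrightarrow> m \<in> {1..M} \<Longrightarrow> n \<in> avail m t \<Longrightarrow> ctx t n m \<in> Phi"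
    and p01: "\<And>n m \<phi>. n \<in> {1..N} \<Longrightarrow> m \<in> {1..M} \<Longrightarrow> \<phi> \<in> Phi \<Longrightarrow> p n m \<phi> \<in> {0..1}"
    and L: "L > 0" and \<alpha>: "\<alpha> > 0"
    and holder: "\<And>n m \<phi> \<phi>'. n \<in> {1..N} \<Longrightarrow> m \<in> {1..M} \<Longrightarrow> \<phi> \<in> Phi \<Longrightarrow> \<phi>' \<in> Phi \<Longrightarrow>
                   \<bar>p n m \<phi> - p n m \<phi>'\<bar> \<le> L * dist \<phi> \<phi>' powr \<alpha>"
    and opt: "\<And>t. t \<in> {1..T} \<Longrightarrow>
                feasible M B avail (\<lambda>n t. c n (y n t)) t (sopt t) \<and>
                (\<forall>s. feasible M B avail (\<lambda>n t. c n (y n t)) t s \<longrightarrow>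
                   util M s (\<lambda>n m. p n m (ctx t n m)) \<le> util M (sopt t) (\<lambda>n m. p n m (ctx t n m)))"
    and policy: "is_COCS T M B avail (\<lambda>n t. c n (y n t)) ctx
                   (\<lambda>t. real t powr (2 * \<alpha> / (3 * \<alpha> + 2)) * ln (real t))
                   (nat \<lceil>real T powr ((2 * \<alpha> / (3 * \<alpha> + 2)) / (2 * \<alpha>))\<rceil>) sel"
  shows "let cmin = Min {c n (y n t) | n t. n \<in> {1..N} \<and> t \<in> {1..T}};
             e = (2 * \<alpha> + 2) / (3 * \<alpha> + 2)
         in exp_regret T M (outcomes T N M p ctx) sopt sel
            \<le> 4 * real N ^ 2 * real M * B / cmin
                 * (ln (real T) * real T powr e + real T powr (2 / (3 * \<alpha> + 2)))
              + real N * real M * B / cmin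
                 * (\<Sum>k = 1..nat \<lfloor>B / cmin\<rfloor>. real (N choose k)) * (pi ^ 2 / 3)
              + (3 * L * 2 powr (\<alpha> / 2) + (2 + 2 * L * 2 powr (\<alpha> / 2)) / e)
                 * real N * real M * B / cmin * real T powr e"
proof -
  interpret cocs_setting N M T B L \<alpha> avail y c ctx p sopt sel
    using N M T B avail c_pos ctx p01 L \<alpha> holder opt policy by unfold_locales blast+
  show ?thesis unfolding Let_def by (rule exp_regret_bound)
qed

end
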